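(* Consider the following two-armed Gaussian bandit problem instance $\mathcal{G}=(\Delta,\sigma)$ with $\Delta>0$, $\sigma>0$: arms $a\in\{0,1\}$ have expected rewards $r(0)=-\Delta/2$ and $r(1)=\Delta/2$, and each pull of arm $a_t$ yields the observed reward $r_t=r(a_t)+z_t$ with $z_t\sim\mathcal{N}(0,\sigma^2)$ i.i.d. TRPO with KL radius $\eta>0$, phase length $\tau$ and $K$ phases (total horizon $T=K\tau$) starts from the uniform policy $\pi_1$ and, in each phase $k=1,\dots,K$, pulls arms according to the current policy $\pi_k$ (a distribution on $\{0,1\}$) for $\tau$ steps, forms the empirical mean rewards $\widehat r(0),\widehat r(1)$ of the two arms from that phase's data (set to $0$ for an arm not pulled), sets $\widehat\Delta_k=\widehat r(1)-\widehat r(0)$, and updates $$\pi_{k+1}=\arg\max_{\pi}\ \widehat\Delta_k\,\pi(1)\quad\text{subject to}\quad D_{\mathrm{KL}}(\pi_k\,\|\,\pi)\le\eta .$$ Define the expected regret $\mathbb{E}[R_T]=\mathbb{E}\big[\sum_{t=1}^T\big(\tfrac{\Delta}{2}-r_t\big)\big]$. Then, with $\Phi$ the standard Gaussian cumulative distribution function, for every such instance, $$\mathbb{E}[R_T]\ \ge\ \frac{\Delta}{2}\,\Phi\!\left(-\frac{\sqrt{\tau}\,\Delta}{2\sigma}\right)\big(1-\exp(-\eta)\big)\,(T-\tau).$$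
   Context: $D_{\mathrm{KL}}(p\|q)=\sum_a p(a)\log\frac{p(a)}{q(a)}$ denotes the Kullback–Leibler divergence between distributions on $\{0,1\}$. The expectation is over all randomness of the actions and reward noise. *)

theory Defs
  imports "HOL-Probability.Probability"
begin

text \<open>Policies on the arms {0,1} are represented by the probability q = pi(1) of arm 1.
  Binary KL divergence D_KL(p || q) for p in [0,1], q in (0,1) (with 0 ln 0 = 0).\<close>
definition kl_bin :: "real \<Rightarrow> real \<Rightarrow> real" where
  "kl_bin p q = p * ln (p / q) + (1 - p) * ln ((1 - p) / (1 - q))"

definition Phi :: "real \<Rightarrow> real" where
  "Phi x = measure (density lborel std_normal_density) {..x}"

text \<open>upd is a TRPO update rule: for current policy p (in (0,1)) and estimated gap d it returns
  a maximiser of d * q subject to KL(p || q) \<le> eta. (Policies q \<in> {0,1} have infinite KL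
  divergence from an interior p, so they are never feasible.)\<close>
definition trpo_update :: "real \<Rightarrow> (real \<Rightarrow> real \<Rightarrow> real) \<Rightarrow> bool" where
  "trpo_update \<eta> upd \<longleftrightarrow>
     (\<forall>p d. 0 < p \<and> p < 1 \<longrightarrow>
        0 < upd p d \<and> upd p d < 1 \<and> kl_bin p (upd p d) \<le> \<eta> \<and>
        (\<forall>q. 0 < q \<and> q < 1 \<and> kl_bin p q \<le> \<eta> \<longrightarrow> d * q \<le> d * upd p d))"

text \<open>Randomness: for each phase k < K and step t < tau a pair (U, Z) with U uniform on [0,1]
  (the arm is 1 iff U < pi_k(1), i.e. drawn from pi_k) and Z ~ N(0, sigma^2) the reward noise;
  all pairs independent.\<close>
definition bandit_space :: "nat \<Rightarrow> nat \<Rightarrow> real \<Rightarrow> (nat \<times> nat \<Rightarrow> real \<times> real) measure" where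
  "bandit_space K \<tau> \<sigma> =
     PiM ({..<K} \<times> {..<\<tau>})
         (\<lambda>_. uniform_measure lborel {0..1} \<Otimes>\<^sub>M density lborel (normal_density 0 \<sigma>))"

type_synonym outcome = "nat \<times> nat \<Rightarrow> real \<times> real"

definition arm :: "outcome \<Rightarrow> real \<Rightarrow> nat \<Rightarrow> nat \<Rightarrow> bool" where
  "arm \<omega> p k t = (fst (\<omega> (k, t)) < p)"

definition reward :: "real \<Rightarrow> outcome \<Rightarrow> real \<Rightarrow> nat \<Rightarrow> nat \<Rightarrow> real" where
  "reward \<Delta> \<omega> p k t = (if arm \<omega> p k t then \<Delta> / 2 else - \<Delta> / 2) + snd (\<omega> (k, t))"

definition emp_mean :: "nat \<Rightarrow> real \<Rightarrow> outcome \<Rightarrow> real \<Rightarrow> nat \<Rightarrow> bool \<Rightarrow> real" where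
  "emp_mean \<tau> \<Delta> \<omega> p k a =
     (let S = {t. t < \<tau> \<and> arm \<omega> p k t = a} in
      if card S = 0 then 0 else (\<Sum>t\<in>S. reward \<Delta> \<omega> p k t) / real (card S))"

definition delta_hat :: "nat \<Rightarrow> real \<Rightarrow> outcome \<Rightarrow> real \<Rightarrow> nat \<Rightarrow> real" where
  "delta_hat \<tau> \<Delta> \<omega> p k = emp_mean \<tau> \<Delta> \<omega> p k True - emp_mean \<tau> \<Delta> \<omega> p k False"

text \<open>Policy (probability of arm 1) used in phase k (phases indexed from 0; phase 0 uses the
  uniform policy).\<close>
fun policy :: "(real \<Rightarrow> real \<Rightarrow> real) \<Rightarrow> nat \<Rightarrow> real \<Rightarrow> outcome \<Rightarrow> nat \<Rightarrow> real" where
  "policy upd \<tau> \<Delta> \<omega> 0 = 1 / 2"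
| "policy upd \<tau> \<Delta> \<omega> (Suc k) =
     upd (policy upd \<tau> \<Delta> \<omega> k) (delta_hat \<tau> \<Delta> \<omega> (policy upd \<tau> \<Delta> \<omega> k) k)"

definition regret :: "(real \<Rightarrow> real \<Rightarrow> real) \<Rightarrow> nat \<Rightarrow> nat \<Rightarrow> real \<Rightarrow> outcome \<Rightarrow> real" where
  "regret upd K \<tau> \<Delta> \<omega> =
     (\<Sum>k<K. \<Sum>t<\<tau>. \<Delta> / 2 - reward \<Delta> \<omega> (policy upd \<tau> \<Delta> \<omega> k) k t)"

end

theory Submission
  imports Defs
begin

text \<open>
  If the estimated gap of a phase is negative, the trust-region step lowers \<open>\<pi>(1)\<close> to at most
  \<open>exp (- \<eta>)\<close>, because either the current policy or the policy with \<open>\<pi>(1) = exp (- \<eta>)\<close> is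
  feasible. Given the arm draws of a phase, the estimated gap is Gaussian, and its mean is at most
  \<open>\<surd>\<tau> \<Delta> / (2 \<sigma>)\<close> standard deviations (mean \<open>\<Delta>/2\<close> and variance \<open>\<sigma>\<^sup>2/\<tau>\<close> if only one arm was
  pulled, mean \<open>\<Delta>\<close> and variance \<open>\<sigma>\<^sup>2 (1/n\<^sub>1 + 1/n\<^sub>0) \<ge> 4\<sigma>\<^sup>2/\<tau>\<close> otherwise), so it is negative
  with probability at least \<open>\<Phi>(-\<surd>\<tau> \<Delta> / (2 \<sigma>))\<close>, whatever the earlier phases did. Hence in
  every phase but the first, each step pulls arm 0 with probability at least
  \<open>\<Phi>(-\<surd>\<tau> \<Delta> / (2 \<sigma>)) (1 - exp (- \<eta>))\<close>, and such a pull costs \<open>\<Delta>\<close> in expectation; the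
  argument in fact gives the bound with \<open>\<Delta>\<close> in place of \<open>\<Delta>/2\<close>.
\<close>

section \<open>Product measures\<close>

lemma indep_vars_PiM_components:
  fixes N :: "'i \<Rightarrow> 'a measure"
  assumes N: "\<And>i. prob_space (N i)" and L: "finite L" "L \<noteq> {}"
  shows "prob_space.indep_vars (PiM L N) N (\<lambda>i \<omega>. \<omega> i) L"
proof -
  interpret P: prob_space "PiM L N" using N by (intro prob_space_PiM) auto
  have "distr (PiM L N) (PiM L N) (\<lambda>x. \<lambda>i\<in>L. x i) = distr (PiM L N) (PiM L N) (\<lambda>x. x)"
    by (rule distr_cong) (auto simp: space_PiM)
  moreover have "PiM L (\<lambda>i. distr (PiM L N) (N i) (\<lambda>\<omega>. \<omega> i)) = PiM L N"
    by (rule PiM_cong) (auto intro!: distr_PiM_component N)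
  ultimately show ?thesis
    using L by (subst P.indep_vars_iff_distr_eq_PiM') auto
qed

lemma emeasure_PiM_restrict_disjoint:
  fixes N :: "'i \<Rightarrow> 'a measure"
  assumes N: "\<And>i. prob_space (N i)" and L: "finite L" "L \<noteq> {}" "A \<subseteq> L" "B \<subseteq> L" "A \<inter> B = {}"
    and G: "G \<in> sets (PiM A N \<Otimes>\<^sub>M PiM B N)"
  shows "emeasure (PiM L N) {\<omega>\<in>space (PiM L N). (restrict \<omega> A, restrict \<omega> B) \<in> G}
         = emeasure (PiM A N \<Otimes>\<^sub>M PiM B N) G"
proof -
  interpret P: prob_space "PiM L N" using N by (intro prob_space_PiM) auto
  have "P.indep_var (PiM A N) (\<lambda>\<omega>. restrict \<omega> A) (PiM B N) (\<lambda>\<omega>. restrict \<omega> B)"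
    using P.indep_var_restrict[OF indep_vars_PiM_components[OF N L(1,2)] L(5,3,4)] by simp
  moreover have "distr (PiM L N) (PiM C N) (\<lambda>\<omega>. restrict \<omega> C) = PiM C N" if "C \<subseteq> L" for C
    using distr_PiM_reindex[of L N id C] that N by (auto simp: restrict_def Pi_iff subset_eq)
  ultimately have law: "distr (PiM L N) (PiM A N \<Otimes>\<^sub>M PiM B N) (\<lambda>\<omega>. (restrict \<omega> A, restrict \<omega> B))
      = PiM A N \<Otimes>\<^sub>M PiM B N"
    using L by (simp add: P.indep_var_distribution_eq)
  have "(\<lambda>\<omega>. (restrict \<omega> A, restrict \<omega> B)) \<in> measurable (PiM L N) (PiM A N \<Otimes>\<^sub>M PiM B N)"
    using L by (intro measurable_Pair measurable_restrict_subset) auto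
  from emeasure_distr[OF this G] show ?thesis
    unfolding law by (simp add: Collect_conj_eq Int_commute vimage_def)
qed

lemma measure_pair_prob_Times:
  assumes "prob_space M1" "prob_space M2" "X \<in> sets M1" "Y \<in> sets M2"
  shows "measure (M1 \<Otimes>\<^sub>M M2) (X \<times> Y) = measure M1 X * measure M2 Y"
  using sigma_finite_measure.emeasure_pair_measure_Times[OF prob_space_imp_sigma_finite[OF assms(2)] assms(3,4)]
  by (simp add: measure_def enn2real_mult)

lemma measure_pair_PiM_zip_vimage:
  fixes A :: "'a measure" and B :: "'b measure"
  assumes A: "prob_space A" and B: "prob_space B" and I: "finite J" "I \<subseteq> J" "I \<noteq> {}"
    and ab: "\<And>i. i \<in> I \<Longrightarrow> a i \<in> sets A \<and> b i \<in> sets B"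
  shows "measure (PiM J (\<lambda>_. A) \<Otimes>\<^sub>M PiM J (\<lambda>_. B))
           (\<Inter>i\<in>I. (\<lambda>q. (fst q i, snd q i)) -` (a i \<times> b i) \<inter> space (PiM J (\<lambda>_. A) \<Otimes>\<^sub>M PiM J (\<lambda>_. B)))
         = (\<Prod>i\<in>I. measure A (a i) * measure B (b i))"
proof -
  interpret A: prob_space A by fact
  interpret B: prob_space B by fact
  interpret IA: product_prob_space "\<lambda>_. A" J by unfold_locales
  interpret IB: product_prob_space "\<lambda>_. B" J by unfold_locales
  have fin: "finite I" using I finite_subset by blast
  have "measure (PiM J (\<lambda>_. A)) {x\<in>space (PiM J (\<lambda>_. A)). \<forall>i\<in>I. x i \<in> a i} = (\<Prod>i\<in>I. measure A (a i))"
    using IA.emeasure_PiM_Collect[OF I(2) fin, of a] ab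
    by (simp add: IA.P.emeasure_eq_measure A.emeasure_eq_measure prod_ennreal prod_nonneg)
  moreover have "measure (PiM J (\<lambda>_. B)) {y\<in>space (PiM J (\<lambda>_. B)). \<forall>i\<in>I. y i \<in> b i} = (\<Prod>i\<in>I. measure B (b i))"
    using IB.emeasure_PiM_Collect[OF I(2) fin, of b] ab
    by (simp add: IB.P.emeasure_eq_measure B.emeasure_eq_measure prod_ennreal prod_nonneg)
  moreover have "{x\<in>space (PiM J (\<lambda>_. A)). \<forall>i\<in>I. x i \<in> a i} \<in> sets (PiM J (\<lambda>_. A))"
    and "{y\<in>space (PiM J (\<lambda>_. B)). \<forall>i\<in>I. y i \<in> b i} \<in> sets (PiM J (\<lambda>_. B))"
    using fin I ab by (auto intro!: sets.sets_Collect_finite_All sets_Collect_single[OF subsetD[OF I(2)]])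
  moreover have "(\<Inter>i\<in>I. (\<lambda>q. (fst q i, snd q i)) -` (a i \<times> b i) \<inter> space (PiM J (\<lambda>_. A) \<Otimes>\<^sub>M PiM J (\<lambda>_. B)))
      = {x\<in>space (PiM J (\<lambda>_. A)). \<forall>i\<in>I. x i \<in> a i} \<times> {y\<in>space (PiM J (\<lambda>_. B)). \<forall>i\<in>I. y i \<in> b i}"
    using I by (auto simp: space_pair_measure)
  ultimately show ?thesis
    by (simp add: measure_pair_prob_Times[OF IA.P.prob_space_axioms IB.P.prob_space_axioms] prod.distrib)
qed

lemma distr_pair_PiM_zip_component:
  fixes A :: "'a measure" and B :: "'b measure"
  assumes A: "prob_space A" and B: "prob_space B" and J: "finite J" "j \<in> J"
  shows "distr (PiM J (\<lambda>_. A) \<Otimes>\<^sub>M PiM J (\<lambda>_. B)) (A \<Otimes>\<^sub>M B) (\<lambda>q. (fst q j, snd q j)) = A \<Otimes>\<^sub>M B"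
proof (rule pair_measure_eqI[symmetric])
  show "sigma_finite_measure A" "sigma_finite_measure B"
    using A B by (auto intro: prob_space_imp_sigma_finite)
  interpret A: prob_space A by fact
  interpret B: prob_space B by fact
  interpret Q: prob_space "PiM J (\<lambda>_. A) \<Otimes>\<^sub>M PiM J (\<lambda>_. B)"
    using A B by (intro prob_space_pair prob_space_PiM)
  fix C D assume CD: "C \<in> sets A" "D \<in> sets B"
  have "(\<lambda>q. (fst q j, snd q j)) \<in> measurable (PiM J (\<lambda>_. A) \<Otimes>\<^sub>M PiM J (\<lambda>_. B)) (A \<Otimes>\<^sub>M B)"
    using J by measurable
  then show "emeasure A C * emeasure B D
      = emeasure (distr (PiM J (\<lambda>_. A) \<Otimes>\<^sub>M PiM J (\<lambda>_. B)) (A \<Otimes>\<^sub>M B) (\<lambda>q. (fst q j, snd q j))) (C \<times> D)"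
    using CD J measure_pair_PiM_zip_vimage[OF A B J(1), of "{j}" "\<lambda>_. C" "\<lambda>_. D"]
    by (simp add: emeasure_distr Q.emeasure_eq_measure A.emeasure_eq_measure B.emeasure_eq_measure ennreal_mult)
qed simp

lemma indep_vars_pair_PiM_zip:
  fixes A :: "'a measure" and B :: "'b measure"
  assumes A: "prob_space A" and B: "prob_space B" and J: "finite J" "J \<noteq> {}"
  shows "prob_space.indep_vars (PiM J (\<lambda>_. A) \<Otimes>\<^sub>M PiM J (\<lambda>_. B)) (\<lambda>_. A \<Otimes>\<^sub>M B) (\<lambda>j q. (fst q j, snd q j)) J"
proof -
  interpret Q: prob_space "PiM J (\<lambda>_. A) \<Otimes>\<^sub>M PiM J (\<lambda>_. B)"
    using A B by (intro prob_space_pair prob_space_PiM)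
  define E where "E = {a \<times> b | a b. a \<in> sets A \<and> b \<in> sets B}"
  show ?thesis
  proof (subst Q.indep_vars_finite[where E="\<lambda>_. E"])
    show "sets (A \<Otimes>\<^sub>M B) = sigma_sets (space (A \<Otimes>\<^sub>M B)) E" for i :: 'i
      unfolding E_def by (simp add: sets_pair_measure space_pair_measure)
    show "Int_stable E" for i :: 'i
      unfolding E_def by (rule Int_stable_pair_measure_generator)
    show "space (A \<Otimes>\<^sub>M B) \<in> E" "E \<subseteq> Pow (space (A \<Otimes>\<^sub>M B))" for i :: 'i
      unfolding E_def by (auto simp: space_pair_measure dest: sets.sets_into_space)
    show "\<forall>F\<in>J \<rightarrow> E. Q.prob (\<Inter>j\<in>J. (\<lambda>q. (fst q j, snd q j)) -` F j \<inter> space (PiM J (\<lambda>_. A) \<Otimes>\<^sub>M PiM J (\<lambda>_. B)))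
        = (\<Prod>j\<in>J. Q.prob ((\<lambda>q. (fst q j, snd q j)) -` F j \<inter> space (PiM J (\<lambda>_. A) \<Otimes>\<^sub>M PiM J (\<lambda>_. B))))"
      (is "\<forall>F\<in>_. ?product F")
    proof
      fix F assume "F \<in> J \<rightarrow> E"
      then obtain a b where "\<And>j. j \<in> J \<Longrightarrow> F j = a j \<times> b j \<and> a j \<in> sets A \<and> b j \<in> sets B"
        unfolding E_def Pi_iff mem_Collect_eq by metis
      then show "?product F"
        using measure_pair_PiM_zip_vimage[OF A B J(1), of J a b]
          measure_pair_PiM_zip_vimage[OF A B J(1), of "{j}" a b for j] J
        by (simp cong: prod.cong)
    qed
  qed (use J in measurable)
qed

lemma distr_PiM_zip:
  fixes A :: "'a measure" and B :: "'b measure" and J :: "'i set"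
  assumes A: "prob_space A" and B: "prob_space B" and J: "finite J" "J \<noteq> {}"
  shows "distr (PiM J (\<lambda>_. A) \<Otimes>\<^sub>M PiM J (\<lambda>_. B)) (PiM J (\<lambda>_. A \<Otimes>\<^sub>M B))
           (\<lambda>q. \<lambda>j\<in>J. (fst q j, snd q j)) = PiM J (\<lambda>_. A \<Otimes>\<^sub>M B)"
proof -
  interpret Q: prob_space "PiM J (\<lambda>_. A) \<Otimes>\<^sub>M PiM J (\<lambda>_. B)"
    using A B by (intro prob_space_pair prob_space_PiM)
  have "distr (PiM J (\<lambda>_. A) \<Otimes>\<^sub>M PiM J (\<lambda>_. B)) (PiM J (\<lambda>_. A \<Otimes>\<^sub>M B)) (\<lambda>q. \<lambda>j\<in>J. (fst q j, snd q j))
      = PiM J (\<lambda>j. distr (PiM J (\<lambda>_. A) \<Otimes>\<^sub>M PiM J (\<lambda>_. B)) (A \<Otimes>\<^sub>M B) (\<lambda>q. (fst q j, snd q j)))"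
    using indep_vars_pair_PiM_zip[OF assms] J
    by (subst (asm) Q.indep_vars_iff_distr_eq_PiM') (auto, measurable)
  also have "\<dots> = PiM J (\<lambda>_. A \<Otimes>\<^sub>M B)"
    by (rule PiM_cong) (auto simp: distr_pair_PiM_zip_component[OF A B J(1)])
  finally show ?thesis .
qed

lemma distr_pair_snd:
  assumes M1: "prob_space M1" and M2: "prob_space M2"
  shows "distr (M1 \<Otimes>\<^sub>M M2) M2 snd = M2"
proof (rule measure_eqI)
  fix A assume "A \<in> sets (distr (M1 \<Otimes>\<^sub>M M2) M2 snd)"
  then have A: "A \<in> sets M2" by simp
  then have "snd -` A \<inter> space (M1 \<Otimes>\<^sub>M M2) = space M1 \<times> A"
    using sets.sets_into_space[OF A] by (auto simp: space_pair_measure)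
  then show "emeasure (distr (M1 \<Otimes>\<^sub>M M2) M2 snd) A = emeasure M2 A"
    using A sigma_finite_measure.emeasure_pair_measure_Times[OF prob_space_imp_sigma_finite[OF M2] sets.top[of M1] A]
    by (simp add: emeasure_distr prob_space.emeasure_space_1[OF M1])
qed simp

lemma emeasure_pair_measure_ge_sections:
  fixes c :: ennreal
  assumes M2: "sigma_finite_measure M2" and G: "G \<in> sets (M1 \<Otimes>\<^sub>M M2)" and X: "X \<in> sets M1"
    and sec: "\<And>x. x \<in> X \<Longrightarrow> c \<le> emeasure M2 (Pair x -` G)"
  shows "c * emeasure M1 X \<le> emeasure (M1 \<Otimes>\<^sub>M M2) G"
proof -
  have "c * emeasure M1 X = (\<integral>\<^sup>+x. c * indicator X x \<partial>M1)"
    using X by (rule nn_integral_cmult_indicator[symmetric])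
  also have "\<dots> \<le> (\<integral>\<^sup>+x. emeasure M2 (Pair x -` G) \<partial>M1)"
    by (intro nn_integral_mono) (simp add: sec split: split_indicator)
  also have "\<dots> = emeasure (M1 \<Otimes>\<^sub>M M2) G"
    using G by (rule sigma_finite_measure.emeasure_pair_measure_alt[OF M2, symmetric])
  finally show ?thesis .
qed

lemma emeasure_PiM_restrict_ge_sections:
  fixes N :: "'i \<Rightarrow> 'a measure" and c :: ennreal
  assumes N: "\<And>i. prob_space (N i)" and L: "finite L" "L \<noteq> {}" "A \<subseteq> L" "B \<subseteq> L" "A \<inter> B = {}"
    and G: "G \<in> sets (PiM A N \<Otimes>\<^sub>M PiM B N)" and X: "X \<in> sets (PiM A N)"
    and sec: "\<And>x. x \<in> X \<Longrightarrow> c \<le> emeasure (PiM B N) (Pair x -` G)"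
  shows "c * emeasure (PiM A N) X \<le> emeasure (PiM L N) {\<omega>\<in>space (PiM L N). (restrict \<omega> A, restrict \<omega> B) \<in> G}"
  using emeasure_pair_measure_ge_sections[OF prob_space_imp_sigma_finite[OF prob_space_PiM[where M=N, OF N]] G X sec]
  unfolding emeasure_PiM_restrict_disjoint[OF N L G] .

section \<open>Gaussian sums\<close>

abbreviation noise_law :: "real \<Rightarrow> real measure" where
  "noise_law \<sigma> \<equiv> density lborel (normal_density 0 \<sigma>)"

lemma emeasure_std_normal_lessThan:
  "emeasure (density lborel std_normal_density) {..<c} = ennreal (Phi c)"
proof -
  interpret S: prob_space "density lborel std_normal_density"
    using prob_space_normal_density[of 1 0] by simp
  have "emeasure (density lborel std_normal_density) {c} = 0"
    by (subst emeasure_density) simp_all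
  then have "emeasure (density lborel std_normal_density) {..c} = emeasure (density lborel std_normal_density) {..<c}"
    using plus_emeasure[of "{..<c}" "density lborel std_normal_density" "{c}"]
    by (simp add: ivl_disj_un(2)[symmetric] Un_commute)
  then show ?thesis unfolding Phi_def S.emeasure_eq_measure by simp
qed

lemma Phi_nonneg: "0 \<le> Phi x"
  unfolding Phi_def by simp

lemma Phi_mono:
  assumes "x \<le> y"
  shows "Phi x \<le> Phi y"
proof -
  interpret S: prob_space "density lborel std_normal_density"
    using prob_space_normal_density[of 1 0] by simp
  show ?thesis unfolding Phi_def using assms by (intro S.finite_measure_mono) auto
qed

lemma distributed_PiM_component_normal:
  assumes \<sigma>: "\<sigma> > 0" and t: "t \<in> T"
  shows "distributed (PiM T (\<lambda>_. noise_law \<sigma>)) lborel (\<lambda>z. z t) (normal_density 0 \<sigma>)"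
proof -
  have N: "prob_space (noise_law \<sigma>)" using \<sigma> by (rule prob_space_normal_density)
  have "distr (PiM T (\<lambda>_. noise_law \<sigma>)) lborel (\<lambda>z. z t) = distr (PiM T (\<lambda>_. noise_law \<sigma>)) (noise_law \<sigma>) (\<lambda>z. z t)"
    by (rule distr_cong) auto
  also have "\<dots> = noise_law \<sigma>" using N t by (intro distr_PiM_component) auto
  finally show ?thesis unfolding distributed_def using t
    by (auto intro!: measurable_compose[OF measurable_component_singleton])
qed

lemma distributed_PiM_normal_weighted_sum:
  fixes T :: "'i set" and a :: "'i \<Rightarrow> real"
  assumes \<sigma>: "\<sigma> > 0" and T: "finite T" and v: "(\<Sum>t\<in>T. (a t)\<^sup>2) > 0"
  shows "distributed (PiM T (\<lambda>_. noise_law \<sigma>)) lborel (\<lambda>z. \<Sum>t\<in>T. a t * z t)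
           (normal_density 0 (\<sigma> * sqrt (\<Sum>t\<in>T. (a t)\<^sup>2)))"
proof -
  define P where "P = PiM T (\<lambda>_. noise_law \<sigma>)"
  \<comment> \<open>\<open>sum_indep_normal\<close> needs positive variances, so the zero weights are dropped.\<close>
  define T' where "T' = {t\<in>T. a t \<noteq> 0}"
  have N: "prob_space (noise_law \<sigma>)" using \<sigma> by (rule prob_space_normal_density)
  interpret P: prob_space P unfolding P_def using N by (intro prob_space_PiM)
  have "finite T'" using T by (simp add: T'_def)
  moreover have "T' \<noteq> {}"
  proof
    assume "T' = {}"
    then have "(\<Sum>t\<in>T. (a t)\<^sup>2) = 0" by (intro sum.neutral) (auto simp: T'_def)
    with v show False by simp
  qed
  ultimately have T': "finite T'" "T' \<noteq> {}" by auto
  have "(\<Sum>t\<in>T. (a t)\<^sup>2) = (\<Sum>t\<in>T'. (a t)\<^sup>2)" and sum_T': "\<And>z. (\<Sum>t\<in>T. a t * z t) = (\<Sum>t\<in>T'. a t * z t)"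
    unfolding T'_def using T by (auto intro!: sum.mono_neutral_right)
  then have var: "(\<Sum>t\<in>T'. (\<bar>a t\<bar> * \<sigma>)\<^sup>2) = \<sigma>\<^sup>2 * (\<Sum>t\<in>T. (a t)\<^sup>2)"
    by (simp add: sum_distrib_left power_mult_distrib mult.commute)
  have "P.indep_vars (\<lambda>_. borel) (\<lambda>t z. (\<lambda>x. a t * x) (z t)) T"
    by (rule P.indep_vars_compose2[OF indep_vars_PiM_components[of "\<lambda>_. noise_law \<sigma>" T, folded P_def]])
       (use N T T' in \<open>auto simp: T'_def\<close>)
  then have indep: "P.indep_vars (\<lambda>_. borel) (\<lambda>t z. a t * z t) T'"
    by (rule P.indep_vars_subset) (auto simp: T'_def)
  have law: "distributed P lborel (\<lambda>z. a t * z t) (normal_density 0 (\<bar>a t\<bar> * \<sigma>))" if "t \<in> T'" for t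
    using P.normal_density_affine[OF distributed_PiM_component_normal[OF \<sigma>, of _ T, folded P_def] \<sigma>, of t "a t" 0] that
    by (auto simp: T'_def)
  have pos: "0 < \<bar>a t\<bar> * \<sigma>" if "t \<in> T'" for t
    using \<sigma> that by (auto simp: T'_def)
  have "distributed P lborel (\<lambda>z. \<Sum>t\<in>T'. a t * z t) (normal_density 0 (sqrt (\<sigma>\<^sup>2 * (\<Sum>t\<in>T. (a t)\<^sup>2))))"
    using P.sum_indep_normal[OF T' indep pos law] unfolding var by simp
  then show ?thesis
    unfolding P_def[symmetric] sum_T' using \<sigma> by (simp add: real_sqrt_mult)
qed

lemma emeasure_PiM_normal_affine_neg:
  fixes T :: "'i set" and a :: "'i \<Rightarrow> real"
  assumes \<sigma>: "\<sigma> > 0" and T: "finite T" and v: "(\<Sum>t\<in>T. (a t)\<^sup>2) > 0"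
  shows "emeasure (PiM T (\<lambda>_. noise_law \<sigma>))
           {z\<in>space (PiM T (\<lambda>_. noise_law \<sigma>)). \<mu> + (\<Sum>t\<in>T. a t * z t) < 0}
         = ennreal (Phi (- \<mu> / (\<sigma> * sqrt (\<Sum>t\<in>T. (a t)\<^sup>2))))"
proof -
  define P where "P = PiM T (\<lambda>_. noise_law \<sigma>)"
  define s where "s = \<sigma> * sqrt (\<Sum>t\<in>T. (a t)\<^sup>2)"
  have "s > 0" unfolding s_def using \<sigma> v by simp
  have N: "prob_space (noise_law \<sigma>)" using \<sigma> by (rule prob_space_normal_density)
  interpret P: prob_space P unfolding P_def using N by (intro prob_space_PiM)
  have std: "distributed P lborel (\<lambda>z. (\<Sum>t\<in>T. a t * z t) / s) std_normal_density"
    using P.normal_standard_normal_convert[OF \<open>s > 0\<close>, of "\<lambda>z. \<Sum>t\<in>T. a t * z t" 0]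
      distributed_PiM_normal_weighted_sum[OF \<sigma> T v] unfolding P_def s_def by simp
  have "{z\<in>space P. \<mu> + (\<Sum>t\<in>T. a t * z t) < 0} = (\<lambda>z. (\<Sum>t\<in>T. a t * z t) / s) -` {..< - \<mu> / s} \<inter> space P"
    using \<open>s > 0\<close> by (auto simp: field_simps)
  also have "emeasure P \<dots> = emeasure (distr P lborel (\<lambda>z. (\<Sum>t\<in>T. a t * z t) / s)) {..< - \<mu> / s}"
    by (rule emeasure_distr[symmetric]) (use std in \<open>auto simp: distributed_def\<close>)
  also have "\<dots> = emeasure (density lborel std_normal_density) {..< - \<mu> / s}"
    using std by (simp add: distributed_def)
  finally show ?thesis
    unfolding emeasure_std_normal_lessThan P_def s_def .
qed

section \<open>Measurability and expected regret\<close>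

abbreviation unif01 :: "real measure" where
  "unif01 \<equiv> uniform_measure lborel {0..1}"

lemma sets_unif01_noise_law: "sets (unif01 \<Otimes>\<^sub>M noise_law \<sigma>) = sets (borel :: (real \<times> real) measure)"
proof -
  have "sets (unif01 \<Otimes>\<^sub>M noise_law \<sigma>) = sets (borel \<Otimes>\<^sub>M borel :: (real \<times> real) measure)"
    by (rule sets_pair_measure_cong) simp_all
  then show ?thesis by (simp only: borel_prod)
qed

lemma prob_space_bandit_space:
  assumes "\<sigma> > 0"
  shows "prob_space (bandit_space K \<tau> \<sigma>)"
  unfolding bandit_space_def using assms
  by (intro prob_space_PiM prob_space_pair prob_space_normal_density prob_space_uniform_measure) auto

lemma borel_measurable_PiM_component:
  assumes "sets M = sets (borel :: 'b::topological_space measure)"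
  shows "(\<lambda>x. x i) \<in> measurable (PiM A (\<lambda>_. M)) (borel :: 'b measure)"
proof (cases "i \<in> A")
  case True
  then have "(\<lambda>x. x i) \<in> measurable (PiM A (\<lambda>_. M)) M" by (rule measurable_component_singleton)
  then show ?thesis unfolding measurable_cong_sets[OF refl assms] .
next
  case False
  then have "\<And>x. x \<in> space (PiM A (\<lambda>_. M)) \<Longrightarrow> x i = undefined"
    by (auto simp: space_PiM PiE_def extensional_def)
  then show ?thesis
    using measurable_cong[of "PiM A (\<lambda>_. M)" "\<lambda>x. x i" "\<lambda>x. undefined" borel] by simp
qed

lemma borel_measurable_fst_real: "fst \<in> borel_measurable (borel :: (real \<times> real) measure)"
  by (subst borel_prod[symmetric]) (rule measurable_fst)

lemma borel_measurable_snd_real: "snd \<in> borel_measurable (borel :: (real \<times> real) measure)"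
  by (subst borel_prod[symmetric]) (rule measurable_snd)

text \<open>If an arm is never pulled, both sums vanish and division by zero yields 0, the value that
  \<open>emp_mean\<close> assigns to an unpulled arm.\<close>
lemma emp_mean_eq_sum_div:
  "emp_mean \<tau> \<Delta> \<omega> p k a =
     (\<Sum>t<\<tau>. if arm \<omega> p k t = a then reward \<Delta> \<omega> p k t else 0) / (\<Sum>t<\<tau>. if arm \<omega> p k t = a then 1 else 0)"
proof -
  have S: "{t. t < \<tau> \<and> arm \<omega> p k t = a} = {t\<in>{..<\<tau>}. arm \<omega> p k t = a}" by auto
  show ?thesis
    unfolding emp_mean_def Let_def S sum.inter_filter[OF finite_lessThan, symmetric]
    by simp
qed

lemma borel_measurable_delta_hat:
  fixes g :: "'a \<Rightarrow> outcome"
  assumes g: "\<And>i. (\<lambda>x. g x i) \<in> borel_measurable M" and p: "p \<in> borel_measurable M"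
  shows "(\<lambda>x. delta_hat \<tau> \<Delta> (g x) (p x) k) \<in> borel_measurable M"
proof -
  have [measurable]: "(\<lambda>x. fst (g x i)) \<in> borel_measurable M" "(\<lambda>x. snd (g x i)) \<in> borel_measurable M" for i
    using measurable_compose[OF g borel_measurable_fst_real] measurable_compose[OF g borel_measurable_snd_real]
    by auto
  note [measurable] = p
  show ?thesis
    unfolding delta_hat_def emp_mean_eq_sum_div arm_def reward_def by measurable
qed

lemma borel_measurable_policy:
  fixes g :: "'a \<Rightarrow> outcome"
  assumes g: "\<And>i. (\<lambda>x. g x i) \<in> borel_measurable M" and upd: "case_prod upd \<in> borel_measurable borel"
  shows "(\<lambda>x. policy upd \<tau> \<Delta> (g x) k) \<in> borel_measurable M"
proof (induction k)
  case (Suc k)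
  have "(\<lambda>x. (policy upd \<tau> \<Delta> (g x) k, delta_hat \<tau> \<Delta> (g x) (policy upd \<tau> \<Delta> (g x) k) k))
          \<in> measurable M (borel \<Otimes>\<^sub>M borel)"
    by (rule measurable_Pair[OF Suc borel_measurable_delta_hat[OF g Suc]])
  from measurable_compose[OF this[unfolded borel_prod] upd] show ?case by simp
qed simp

lemma borel_measurable_delta_hat_policy_pair:
  assumes N: "sets N = sets (borel :: (real \<times> real) measure)" and upd: "case_prod upd \<in> borel_measurable borel"
  shows "(\<lambda>q. delta_hat \<tau> \<Delta> (snd q) (policy upd \<tau> \<Delta> (fst q) j) j)
           \<in> borel_measurable (PiM A (\<lambda>_. N) \<Otimes>\<^sub>M PiM B (\<lambda>_. N))"
proof -
  have "(\<lambda>q. fst q i) \<in> borel_measurable (PiM A (\<lambda>_. N) \<Otimes>\<^sub>M PiM B (\<lambda>_. N))"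
    and "(\<lambda>q. snd q i) \<in> borel_measurable (PiM A (\<lambda>_. N) \<Otimes>\<^sub>M PiM B (\<lambda>_. N))" for i
    by (rule measurable_compose[OF measurable_fst borel_measurable_PiM_component[OF N]]
             measurable_compose[OF measurable_snd borel_measurable_PiM_component[OF N]])+
  then show ?thesis
    by (intro borel_measurable_delta_hat borel_measurable_policy upd)
qed

lemma sets_bad_pull:
  assumes upd: "case_prod upd \<in> borel_measurable borel"
  shows "{\<omega>\<in>space (bandit_space K \<tau> \<sigma>). \<not> arm \<omega> (policy upd \<tau> \<Delta> \<omega> k) k t} \<in> sets (bandit_space K \<tau> \<sigma>)"
proof -
  have comp: "(\<lambda>\<omega>. \<omega> i) \<in> borel_measurable (bandit_space K \<tau> \<sigma>)" for i
    unfolding bandit_space_def by (rule borel_measurable_PiM_component[OF sets_unif01_noise_law])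
  note [measurable] = measurable_compose[OF comp borel_measurable_fst_real] borel_measurable_policy[OF comp upd]
  show ?thesis unfolding arm_def by measurable
qed

lemma noise_coordinate_mean_zero:
  assumes \<sigma>: "\<sigma> > 0" and i: "i \<in> L"
  shows "integrable (PiM L (\<lambda>_. unif01 \<Otimes>\<^sub>M noise_law \<sigma>)) (\<lambda>\<omega>. snd (\<omega> i))"
    and "(\<integral>\<omega>. snd (\<omega> i) \<partial>PiM L (\<lambda>_. unif01 \<Otimes>\<^sub>M noise_law \<sigma>)) = 0"
proof -
  define P where "P = PiM L (\<lambda>_. unif01 \<Otimes>\<^sub>M noise_law \<sigma>)"
  have U: "prob_space unif01" by (rule prob_space_uniform_measure) auto
  have W: "prob_space (noise_law \<sigma>)" using \<sigma> by (rule prob_space_normal_density)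
  have coord: "(\<lambda>\<omega>. \<omega> i) \<in> measurable P (unif01 \<Otimes>\<^sub>M noise_law \<sigma>)"
    unfolding P_def using i by simp
  have "distr P (noise_law \<sigma>) (\<lambda>\<omega>. snd (\<omega> i)) = distr (distr P (unif01 \<Otimes>\<^sub>M noise_law \<sigma>) (\<lambda>\<omega>. \<omega> i)) (noise_law \<sigma>) snd"
    using distr_distr[OF measurable_snd coord] by (simp add: comp_def)
  also have "\<dots> = noise_law \<sigma>"
    using distr_PiM_component[of L "\<lambda>_. unif01 \<Otimes>\<^sub>M noise_law \<sigma>" i] prob_space_pair[OF U W] i
    unfolding P_def by (simp add: distr_pair_snd[OF U W])
  finally have law: "distr P (noise_law \<sigma>) (\<lambda>\<omega>. snd (\<omega> i)) = noise_law \<sigma>" .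
  have m: "(\<lambda>\<omega>. snd (\<omega> i)) \<in> measurable P (noise_law \<sigma>)"
    by (rule measurable_compose[OF coord measurable_snd])
  have "integrable (noise_law \<sigma>) (\<lambda>x. x)"
    by (subst integrable_density) (auto simp: integrable_normal_moment_nz_1[OF \<sigma>])
  then have "integrable (distr P (noise_law \<sigma>) (\<lambda>\<omega>. snd (\<omega> i))) (\<lambda>x. x)"
    unfolding law .
  then show "integrable (PiM L (\<lambda>_. unif01 \<Otimes>\<^sub>M noise_law \<sigma>)) (\<lambda>\<omega>. snd (\<omega> i))"
    unfolding P_def[symmetric] by (subst (asm) integrable_distr_eq[OF m]) auto
  have "integral\<^sup>L (noise_law \<sigma>) (\<lambda>x. x) = 0"
    by (subst integral_density) (auto simp: integral_normal_moment_nz_1[OF \<sigma>])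
  then have "integral\<^sup>L (distr P (noise_law \<sigma>) (\<lambda>\<omega>. snd (\<omega> i))) (\<lambda>x. x) = 0"
    unfolding law .
  then show "(\<integral>\<omega>. snd (\<omega> i) \<partial>PiM L (\<lambda>_. unif01 \<Otimes>\<^sub>M noise_law \<sigma>)) = 0"
    unfolding P_def[symmetric] by (subst (asm) integral_distr[OF m]) auto
qed

lemma integral_regret_eq_bad_pulls:
  fixes \<sigma> \<Delta> :: real and K \<tau> :: nat
  assumes \<sigma>: "\<sigma> > 0" and upd: "case_prod upd \<in> borel_measurable borel"
  shows "(\<integral>\<omega>. regret upd K \<tau> \<Delta> \<omega> \<partial>bandit_space K \<tau> \<sigma>)
    = \<Delta> * (\<Sum>k<K. \<Sum>t<\<tau>. measure (bandit_space K \<tau> \<sigma>)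
         {\<omega>\<in>space (bandit_space K \<tau> \<sigma>). \<not> arm \<omega> (policy upd \<tau> \<Delta> \<omega> k) k t})"
proof -
  define P where "P = bandit_space K \<tau> \<sigma>"
  define bad where "bad k t = {\<omega>\<in>space P. \<not> arm \<omega> (policy upd \<tau> \<Delta> \<omega> k) k t}" for k t
  interpret P: prob_space P unfolding P_def using \<sigma> by (rule prob_space_bandit_space)
  have bad: "bad k t \<in> sets P" for k t
    unfolding bad_def P_def by (rule sets_bad_pull[OF upd])
  have step: "integrable P (\<lambda>\<omega>. \<Delta> * indicator (bad k t) \<omega> - snd (\<omega> (k, t)))"
    "(\<integral>\<omega>. \<Delta> * indicator (bad k t) \<omega> - snd (\<omega> (k, t)) \<partial>P) = \<Delta> * measure P (bad k t)"
    if "k < K" "t < \<tau>" for k t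
  proof -
    have "integrable P (\<lambda>\<omega>. snd (\<omega> (k, t)))" "(\<integral>\<omega>. snd (\<omega> (k, t)) \<partial>P) = 0"
      using noise_coordinate_mean_zero[OF \<sigma>, of "(k, t)" "{..<K} \<times> {..<\<tau>}"] that
      by (simp_all add: P_def bandit_space_def)
    moreover have "integrable P (indicator (bad k t) :: _ \<Rightarrow> real)"
      using bad by (intro integrable_real_indicator) (simp_all add: P.emeasure_finite less_top[symmetric])
    ultimately show "integrable P (\<lambda>\<omega>. \<Delta> * indicator (bad k t) \<omega> - snd (\<omega> (k, t)))"
      "(\<integral>\<omega>. \<Delta> * indicator (bad k t) \<omega> - snd (\<omega> (k, t)) \<partial>P) = \<Delta> * measure P (bad k t)"
      using bad by (simp_all add: P.emeasure_finite less_top[symmetric])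
  qed
  have "regret upd K \<tau> \<Delta> \<omega> = (\<Sum>k<K. \<Sum>t<\<tau>. \<Delta> * indicator (bad k t) \<omega> - snd (\<omega> (k, t)))"
    if "\<omega> \<in> space P" for \<omega>
    unfolding regret_def reward_def bad_def using that by (intro sum.cong refl) (simp add: indicator_def)
  then have "(\<integral>\<omega>. regret upd K \<tau> \<Delta> \<omega> \<partial>P)
      = (\<integral>\<omega>. (\<Sum>k<K. \<Sum>t<\<tau>. \<Delta> * indicator (bad k t) \<omega> - snd (\<omega> (k, t))) \<partial>P)"
    by (rule Bochner_Integration.integral_cong[OF refl])
  also have "\<dots> = (\<Sum>k<K. \<integral>\<omega>. (\<Sum>t<\<tau>. \<Delta> * indicator (bad k t) \<omega> - snd (\<omega> (k, t))) \<partial>P)"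
    by (rule Bochner_Integration.integral_sum) (auto intro!: Bochner_Integration.integrable_sum step)
  also have "\<dots> = (\<Sum>k<K. \<Sum>t<\<tau>. \<Delta> * measure P (bad k t))"
    by (intro sum.cong refl) (simp add: Bochner_Integration.integral_sum step)
  finally show ?thesis
    unfolding P_def bad_def sum_distrib_left .
qed

section \<open>The estimated gap of one phase\<close>

lemma delta_hat_cong:
  assumes "\<And>t. t < \<tau> \<Longrightarrow> \<omega> (k, t) = \<omega>' (k, t)"
  shows "delta_hat \<tau> \<Delta> \<omega> p k = delta_hat \<tau> \<Delta> \<omega>' p k"
  unfolding delta_hat_def emp_mean_eq_sum_div arm_def reward_def
  using assms by (intro arg_cong2[where f="(-)"] arg_cong2[where f="(/)"] sum.cong) auto

lemma policy_cong:
  assumes "\<And>k' t. k' < k \<Longrightarrow> t < \<tau> \<Longrightarrow> \<omega> (k', t) = \<omega>' (k', t)"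
  shows "policy upd \<tau> \<Delta> \<omega> k = policy upd \<tau> \<Delta> \<omega>' k"
  using assms
proof (induction k)
  case (Suc k)
  then have "policy upd \<tau> \<Delta> \<omega> k = policy upd \<tau> \<Delta> \<omega>' k" by auto
  moreover have "delta_hat \<tau> \<Delta> \<omega> p k = delta_hat \<tau> \<Delta> \<omega>' p k" for p
    using Suc.prems by (intro delta_hat_cong) auto
  ultimately show ?case by simp
qed simp

lemma delta_hat_eq_gap_plus_noise:
  fixes \<omega> :: outcome and p :: real and k \<tau> :: nat
  defines "n1 \<equiv> (\<Sum>t<\<tau>. if arm \<omega> p k t then 1 else 0 :: real)"
    and "n0 \<equiv> (\<Sum>t<\<tau>. if \<not> arm \<omega> p k t then 1 else 0 :: real)"
  shows "delta_hat \<tau> \<Delta> \<omega> p k =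
     (if n1 = 0 then 0 else \<Delta> / 2) + (if n0 = 0 then 0 else \<Delta> / 2)
     + (\<Sum>t<\<tau>. (if arm \<omega> p k t then 1 / n1 else - 1 / n0) * snd (\<omega> (k, t)))"
proof -
  define z where "z t = snd (\<omega> (k, t))" for t
  have mean: "emp_mean \<tau> \<Delta> \<omega> p k a = (if n = 0 then 0 else c) + (\<Sum>t<\<tau>. if arm \<omega> p k t = a then z t else 0) / n"
    if n: "n = (\<Sum>t<\<tau>. if arm \<omega> p k t = a then 1 else 0)" and c: "c = (if a then \<Delta> / 2 else - \<Delta> / 2)" for a n c
  proof -
    have "(\<Sum>t<\<tau>. if arm \<omega> p k t = a then reward \<Delta> \<omega> p k t else 0)
        = c * n + (\<Sum>t<\<tau>. if arm \<omega> p k t = a then z t else 0)"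
      unfolding n sum_distrib_left sum.distrib[symmetric] by (rule sum.cong) (auto simp: reward_def z_def c)
    then show ?thesis
      unfolding emp_mean_eq_sum_div n[symmetric] by (simp add: add_divide_distrib)
  qed
  have "(\<Sum>t<\<tau>. (if arm \<omega> p k t then 1 / n1 else - 1 / n0) * z t)
      = (\<Sum>t<\<tau>. if arm \<omega> p k t then z t else 0) / n1 - (\<Sum>t<\<tau>. if \<not> arm \<omega> p k t then z t else 0) / n0"
    unfolding sum_divide_distrib sum_subtractf[symmetric] by (rule sum.cong) auto
  moreover have "emp_mean \<tau> \<Delta> \<omega> p k True = (if n1 = 0 then 0 else \<Delta> / 2) + (\<Sum>t<\<tau>. if arm \<omega> p k t then z t else 0) / n1"
    using mean[of n1 True "\<Delta> / 2"] unfolding n1_def by simp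
  moreover have "emp_mean \<tau> \<Delta> \<omega> p k False = (if n0 = 0 then 0 else - \<Delta> / 2) + (\<Sum>t<\<tau>. if \<not> arm \<omega> p k t then z t else 0) / n0"
    using mean[of n0 False "- \<Delta> / 2"] unfolding n0_def by simp
  ultimately show ?thesis
    unfolding delta_hat_def z_def by simp
qed

text \<open>With Isabelle's convention 1 / 0 = 0, an empty class correctly contributes nothing.\<close>
lemma sum_sq_class_weights:
  fixes P :: "nat \<Rightarrow> bool" and \<tau> :: nat
  defines "n1 \<equiv> (\<Sum>t<\<tau>. if P t then 1 else 0 :: real)"
    and "n0 \<equiv> (\<Sum>t<\<tau>. if \<not> P t then 1 else 0 :: real)"
  shows "(\<Sum>t<\<tau>. (if P t then 1 / n1 else - 1 / n0)\<^sup>2) = 1 / n1 + 1 / n0"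
    and "n1 + n0 = real \<tau>"
proof -
  have "(\<Sum>t<\<tau>. (if P t then 1 / n1 else - 1 / n0)\<^sup>2)
      = n1 * (1 / n1)\<^sup>2 + n0 * (1 / n0)\<^sup>2"
    unfolding n1_def n0_def sum_distrib_right sum.distrib[symmetric] by (rule sum.cong) auto
  then show "(\<Sum>t<\<tau>. (if P t then 1 / n1 else - 1 / n0)\<^sup>2) = 1 / n1 + 1 / n0"
    by (simp add: power2_eq_square)
  have "n1 + n0 = (\<Sum>t<\<tau>. 1)"
    unfolding n1_def n0_def sum.distrib[symmetric] by (rule sum.cong) auto
  then show "n1 + n0 = real \<tau>" by simp
qed

lemma gap_to_noise_ratio_bound:
  fixes n1 n0 \<Delta> \<sigma> :: real and \<tau> :: nat
  assumes n: "n1 \<ge> 0" "n0 \<ge> 0" "n1 + n0 = real \<tau>" "\<tau> > 0" and \<Delta>: "\<Delta> > 0" and \<sigma>: "\<sigma> > 0"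
  defines "\<mu> \<equiv> (if n1 = 0 then 0 else \<Delta> / 2) + (if n0 = 0 then 0 else \<Delta> / 2)"
    and "v \<equiv> 1 / n1 + 1 / n0"
  shows "v > 0" and "- sqrt (real \<tau>) * \<Delta> / (2 * \<sigma>) \<le> - \<mu> / (\<sigma> * sqrt v)"
proof -
  consider "n1 = 0" "n0 = real \<tau>" | "n0 = 0" "n1 = real \<tau>" | "n1 > 0" "n0 > 0"
    using n by fastforce
  then have "v > 0 \<and> (2 * \<mu>)\<^sup>2 \<le> real \<tau> * v * \<Delta>\<^sup>2"
  proof cases
    case 3
    have "4 * (n1 * n0) \<le> (n1 + n0)\<^sup>2"
      using sum_squares_ge_zero[of "n1 - n0" 0] by (simp add: power2_eq_square algebra_simps)
    moreover have "real \<tau> * v = (n1 + n0)\<^sup>2 / (n1 * n0)"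
      using 3 by (simp add: v_def n(3)[symmetric] field_simps power2_eq_square)
    ultimately have "4 \<le> real \<tau> * v"
      using 3 by (simp add: le_divide_eq)
    then show ?thesis
      using 3 \<Delta> by (simp add: \<mu>_def v_def power2_eq_square mult_right_mono add_pos_pos)
  qed (use n \<Delta> in \<open>simp_all add: \<mu>_def v_def power2_eq_square\<close>)
  then have "v > 0" and "2 * \<mu> \<le> sqrt (real \<tau>) * sqrt v * \<Delta>"
    using \<Delta> real_le_rsqrt[of "2 * \<mu>" "real \<tau> * v * \<Delta>\<^sup>2"]
    by (auto simp: real_sqrt_mult)
  then show "v > 0" and "- sqrt (real \<tau>) * \<Delta> / (2 * \<sigma>) \<le> - \<mu> / (\<sigma> * sqrt v)"
    using \<sigma> by (auto simp: field_simps)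
qed

lemma emeasure_delta_hat_neg_given_draws:
  fixes u :: "nat \<times> nat \<Rightarrow> real" and p :: real and j \<tau> :: nat
  assumes \<sigma>: "\<sigma> > 0" and \<Delta>: "\<Delta> > 0" and \<tau>: "\<tau> > 0"
  shows "ennreal (Phi (- sqrt (real \<tau>) * \<Delta> / (2 * \<sigma>))) \<le>
    emeasure (PiM ({j} \<times> {..<\<tau>}) (\<lambda>_. noise_law \<sigma>))
      {z\<in>space (PiM ({j} \<times> {..<\<tau>}) (\<lambda>_. noise_law \<sigma>)). delta_hat \<tau> \<Delta> (\<lambda>i\<in>{j} \<times> {..<\<tau>}. (u i, z i)) p j < 0}"
proof -
  define n1 where "n1 = (\<Sum>t<\<tau>. if u (j, t) < p then 1 else 0 :: real)"
  define n0 where "n0 = (\<Sum>t<\<tau>. if \<not> u (j, t) < p then 1 else 0 :: real)"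
  define \<mu> where "\<mu> = (if n1 = 0 then 0 else \<Delta> / 2) + (if n0 = 0 then 0 else \<Delta> / 2)"
  define c where "c = (\<lambda>t. if u (j, t) < p then 1 / n1 else - 1 / n0)"
  have sum_J: "(\<Sum>i\<in>{j} \<times> {..<\<tau>}. f i) = (\<Sum>t<\<tau>. f (j, t))" for f :: "nat \<times> nat \<Rightarrow> real"
  proof -
    have "{j} \<times> {..<\<tau>} = Pair j ` {..<\<tau>}" by auto
    then show ?thesis by (simp add: sum.reindex inj_on_def)
  qed
  have "delta_hat \<tau> \<Delta> (\<lambda>i\<in>{j} \<times> {..<\<tau>}. (u i, z i)) p j = \<mu> + (\<Sum>i\<in>{j} \<times> {..<\<tau>}. c (snd i) * z i)" for z
  proof -
    have arm: "arm (\<lambda>i\<in>{j} \<times> {..<\<tau>}. (u i, z i)) p j t = (u (j, t) < p)" and noise: "snd ((\<lambda>i\<in>{j} \<times> {..<\<tau>}. (u i, z i)) (j, t)) = z (j, t)"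
      if "t < \<tau>" for t
      using that by (simp_all add: arm_def)
    have counts: "(\<Sum>t<\<tau>. if arm (\<lambda>i\<in>{j} \<times> {..<\<tau>}. (u i, z i)) p j t then 1 else 0 :: real) = n1"
        "(\<Sum>t<\<tau>. if \<not> arm (\<lambda>i\<in>{j} \<times> {..<\<tau>}. (u i, z i)) p j t then 1 else 0 :: real) = n0"
      and weights: "(\<Sum>t<\<tau>. (if arm (\<lambda>i\<in>{j} \<times> {..<\<tau>}. (u i, z i)) p j t then 1 / n1 else - 1 / n0) * snd ((\<lambda>i\<in>{j} \<times> {..<\<tau>}. (u i, z i)) (j, t)))
            = (\<Sum>i\<in>{j} \<times> {..<\<tau>}. c (snd i) * z i)"
      unfolding n1_def n0_def c_def sum_J by (auto intro!: sum.cong simp: arm noise)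
    show ?thesis
      unfolding delta_hat_eq_gap_plus_noise[where \<omega>="\<lambda>i\<in>{j} \<times> {..<\<tau>}. (u i, z i)" and k=j] counts weights \<mu>_def ..
  qed
  moreover have "(\<Sum>i\<in>{j} \<times> {..<\<tau>}. (c (snd i))\<^sup>2) = 1 / n1 + 1 / n0" and "n1 + n0 = real \<tau>"
    using sum_sq_class_weights[of "\<lambda>t. u (j, t) < p" \<tau>]
    unfolding c_def n1_def n0_def sum_J by simp_all
  moreover have "n1 \<ge> 0" "n0 \<ge> 0" unfolding n1_def n0_def by (auto intro!: sum_nonneg)
  ultimately show ?thesis
    using gap_to_noise_ratio_bound[of n1 n0 \<tau> \<Delta> \<sigma>] \<tau> \<Delta> \<sigma> Phi_mono
      emeasure_PiM_normal_affine_neg[OF \<sigma>, of "{j} \<times> {..<\<tau>}" "\<lambda>i. c (snd i)" \<mu>]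
    unfolding \<mu>_def by (simp add: ennreal_leI)
qed

lemma emeasure_delta_hat_neg_ge:
  fixes p :: real and j \<tau> :: nat
  assumes \<sigma>: "\<sigma> > 0" and \<Delta>: "\<Delta> > 0" and \<tau>: "\<tau> > 0"
  shows "ennreal (Phi (- sqrt (real \<tau>) * \<Delta> / (2 * \<sigma>))) \<le>
    emeasure (PiM ({j} \<times> {..<\<tau>}) (\<lambda>_. unif01 \<Otimes>\<^sub>M noise_law \<sigma>))
      {\<omega>\<in>space (PiM ({j} \<times> {..<\<tau>}) (\<lambda>_. unif01 \<Otimes>\<^sub>M noise_law \<sigma>)). delta_hat \<tau> \<Delta> \<omega> p j < 0}"
proof -
  define J where "J = {j} \<times> {..<\<tau>}"
  define M where "M = PiM J (\<lambda>_. unif01 \<Otimes>\<^sub>M noise_law \<sigma>)"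
  define PU where "PU = PiM J (\<lambda>_. unif01)"
  define PN where "PN = PiM J (\<lambda>_. noise_law \<sigma>)"
  define zip where "zip = (\<lambda>q :: (nat \<times> nat \<Rightarrow> real) \<times> (nat \<times> nat \<Rightarrow> real). \<lambda>i\<in>J. (fst q i, snd q i))"
  define S where "S = {\<omega>\<in>space M. delta_hat \<tau> \<Delta> \<omega> p j < 0}"
  have U: "prob_space unif01" by (rule prob_space_uniform_measure) auto
  have N: "prob_space (noise_law \<sigma>)" using \<sigma> by (rule prob_space_normal_density)
  interpret PN: prob_space PN unfolding PN_def using N by (rule prob_space_PiM)
  interpret PU: prob_space PU unfolding PU_def using U by (rule prob_space_PiM)
  have law: "distr (PU \<Otimes>\<^sub>M PN) M zip = M"
    unfolding PU_def PN_def M_def zip_def using U N \<tau> by (intro distr_PiM_zip) (auto simp: J_def)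
  have zip: "zip \<in> measurable (PU \<Otimes>\<^sub>M PN) M"
    unfolding zip_def PU_def PN_def M_def by measurable
  have [measurable]: "(\<lambda>\<omega>. delta_hat \<tau> \<Delta> \<omega> p j) \<in> borel_measurable M"
    unfolding M_def
    by (rule borel_measurable_delta_hat[where g="\<lambda>\<omega>. \<omega>", OF borel_measurable_PiM_component[OF sets_unif01_noise_law]]) simp
  have S: "S \<in> sets M" unfolding S_def by measurable
  have "Pair u -` (zip -` S \<inter> space (PU \<Otimes>\<^sub>M PN)) = {z\<in>space PN. delta_hat \<tau> \<Delta> (\<lambda>i\<in>J. (u i, z i)) p j < 0}"
    if "u \<in> space PU" for u
    using that measurable_space[OF zip] unfolding S_def zip_def by (auto simp: space_pair_measure)
  then have "ennreal (Phi (- sqrt (real \<tau>) * \<Delta> / (2 * \<sigma>))) * emeasure PU (space PU)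
      \<le> emeasure (PU \<Otimes>\<^sub>M PN) (zip -` S \<inter> space (PU \<Otimes>\<^sub>M PN))"
    using measurable_sets[OF zip S] emeasure_delta_hat_neg_given_draws[OF \<sigma> \<Delta> \<tau>, of j, folded J_def]
    by (intro emeasure_pair_measure_ge_sections[OF PN.sigma_finite_measure_axioms]) (auto simp: PN_def)
  then show ?thesis
    using emeasure_distr[OF zip S] unfolding law by (simp add: PU.emeasure_space_1 S_def M_def J_def)
qed

section \<open>Trust-region steps\<close>

lemma kl_bin_le_neg_ln:
  fixes p q :: real
  assumes q: "0 < q" "q \<le> p" and p: "p < 1"
  shows "kl_bin p q \<le> - ln q"
proof -
  have "p * ln (p / q) = p * ln p - p * ln q"
    using q by (simp add: ln_div algebra_simps)
  moreover have "p * ln p \<le> 0"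
    using q p by (simp add: mult_nonneg_nonpos)
  moreover have "- p * ln q \<le> - ln q"
    using q p by (simp add: mult_left_le_one_le)
  moreover have "(1 - p) * ln ((1 - p) / (1 - q)) \<le> 0"
    using q p by (intro mult_nonneg_nonpos) auto
  ultimately show ?thesis
    unfolding kl_bin_def by linarith
qed

text \<open>Either the current policy or the policy with \<open>\<pi>(1) = exp (- \<eta>)\<close> lies in the trust region.\<close>
lemma trpo_update_le_exp_neg:
  assumes upd: "trpo_update \<eta> upd" and \<eta>: "\<eta> > 0" and p: "0 < p" "p < 1" and d: "d < 0"
  shows "upd p d \<le> exp (- \<eta>)"
proof -
  have opt: "d * q \<le> d * upd p d" if "0 < q" "q < 1" "kl_bin p q \<le> \<eta>" for q
    using upd p that unfolding trpo_update_def by blast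
  show ?thesis
  proof (cases "p \<le> exp (- \<eta>)")
    case True
    have "kl_bin p p = 0" unfolding kl_bin_def using p by simp
    then have "upd p d \<le> p" using opt[of p] p \<eta> d by (simp add: mult_le_cancel_left)
    then show ?thesis using True by simp
  next
    case False
    then have "kl_bin p (exp (- \<eta>)) \<le> \<eta>" using kl_bin_le_neg_ln[of "exp (- \<eta>)" p] p by simp
    then show ?thesis using opt[of "exp (- \<eta>)"] \<eta> d by (simp add: mult_le_cancel_left)
  qed
qed

lemma policy_in_open_unit_interval:
  assumes "trpo_update \<eta> upd"
  shows "0 < policy upd \<tau> \<Delta> \<omega> k \<and> policy upd \<tau> \<Delta> \<omega> k < 1"
  using assms by (induction k) (simp_all add: trpo_update_def)

section \<open>Pulls of the worse arm\<close>

lemma emeasure_PiM_draw_atLeast: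
  assumes \<sigma>: "\<sigma> > 0" and i: "i \<in> A" and e: "0 \<le> e" "e \<le> 1"
  shows "emeasure (PiM A (\<lambda>_. unif01 \<Otimes>\<^sub>M noise_law \<sigma>))
           {x\<in>space (PiM A (\<lambda>_. unif01 \<Otimes>\<^sub>M noise_law \<sigma>)). x i \<in> {e..} \<times> UNIV} = ennreal (1 - e)"
proof -
  have W: "prob_space (noise_law \<sigma>)" using \<sigma> by (rule prob_space_normal_density)
  interpret N: prob_space "unif01 \<Otimes>\<^sub>M noise_law \<sigma>"
    using W by (intro prob_space_pair prob_space_uniform_measure) auto
  interpret PA: product_prob_space "\<lambda>_. unif01 \<Otimes>\<^sub>M noise_law \<sigma>" A by unfold_locales
  have "{0..1::real} \<inter> {e..} = {e..1}" using e by auto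
  then have "emeasure unif01 {e..} = ennreal (1 - e)"
    using e by (simp add: divide_ennreal_def)
  moreover have "{e..} \<times> UNIV \<in> sets (unif01 \<Otimes>\<^sub>M noise_law \<sigma>)"
    unfolding sets_unif01_noise_law borel_prod[symmetric] by (intro pair_measureI) auto
  ultimately show ?thesis
    using i sigma_finite_measure.emeasure_pair_measure_Times[OF prob_space_imp_sigma_finite[OF W], of "{e..}" unif01 UNIV]
    by (simp add: PA.emeasure_PiM_Collect_single prob_space.emeasure_space_1[OF W, simplified])
qed

lemma emeasure_gap_estimate_neg_and_draw_ge:
  fixes \<sigma> \<Delta> \<eta> :: real and K \<tau> j t :: nat and upd :: "real \<Rightarrow> real \<Rightarrow> real"
  assumes \<sigma>: "\<sigma> > 0" and \<Delta>: "\<Delta> > 0" and \<eta>: "\<eta> > 0" and upd: "case_prod upd \<in> borel_measurable borel"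
    and jK: "Suc j < K" and t: "t < \<tau>"
  shows "ennreal (Phi (- sqrt (real \<tau>) * \<Delta> / (2 * \<sigma>)) * (1 - exp (- \<eta>))) \<le>
    emeasure (bandit_space K \<tau> \<sigma>)
      {\<omega>\<in>space (bandit_space K \<tau> \<sigma>). exp (- \<eta>) \<le> fst (\<omega> (Suc j, t)) \<and> delta_hat \<tau> \<Delta> \<omega> (policy upd \<tau> \<Delta> \<omega> j) j < 0}"
proof -
  define N where "N = unif01 \<Otimes>\<^sub>M noise_law \<sigma>"
  \<comment> \<open>\<open>A\<close>: the phases before \<open>j\<close>, which fix the policy of phase \<open>j\<close>, and the arm draw at step \<open>t\<close> of
    phase \<open>j + 1\<close>; \<open>B\<close>: phase \<open>j\<close>, which fixes its estimated gap.\<close>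
  define A where "A = {..<j} \<times> {..<\<tau>} \<union> {(Suc j, t)}"
  define B where "B = {j} \<times> {..<\<tau>}"
  define e where "e = exp (- \<eta>)"
  define G where "G = {q\<in>space (PiM A (\<lambda>_. N) \<Otimes>\<^sub>M PiM B (\<lambda>_. N)).
      e \<le> fst (fst q (Suc j, t)) \<and> delta_hat \<tau> \<Delta> (snd q) (policy upd \<tau> \<Delta> (fst q) j) j < 0}"
  define X where "X = {x\<in>space (PiM A (\<lambda>_. N)). x (Suc j, t) \<in> {e..} \<times> UNIV}"
  have N: "prob_space N"
    unfolding N_def using \<sigma> by (intro prob_space_pair prob_space_normal_density prob_space_uniform_measure) auto
  have sN: "sets N = sets (borel :: (real \<times> real) measure)" unfolding N_def by (rule sets_unif01_noise_law)
  have G: "G \<in> sets (PiM A (\<lambda>_. N) \<Otimes>\<^sub>M PiM B (\<lambda>_. N))"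
  proof -
    note [measurable] = borel_measurable_delta_hat_policy_pair[OF sN upd]
      measurable_compose[OF measurable_fst borel_measurable_PiM_component[OF sN]]
      measurable_compose[OF _ borel_measurable_fst_real]
    show ?thesis unfolding G_def by measurable
  qed
  have "{e..} \<times> UNIV \<in> sets N"
    unfolding sN borel_prod[symmetric] by (intro pair_measureI) auto
  then have X: "X \<in> sets (PiM A (\<lambda>_. N))"
    unfolding X_def by (auto simp: A_def)
  have sec: "ennreal (Phi (- sqrt (real \<tau>) * \<Delta> / (2 * \<sigma>))) \<le> emeasure (PiM B (\<lambda>_. N)) (Pair x -` G)"
    if "x \<in> X" for x
  proof -
    have "Pair x -` G = {y\<in>space (PiM B (\<lambda>_. N)). delta_hat \<tau> \<Delta> y (policy upd \<tau> \<Delta> x j) j < 0}"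
      using that unfolding G_def X_def by (auto simp: space_pair_measure)
    then show ?thesis
      using emeasure_delta_hat_neg_ge[OF \<sigma> \<Delta>, of \<tau> j "policy upd \<tau> \<Delta> x j"] t unfolding B_def N_def by simp
  qed
  have "ennreal (Phi (- sqrt (real \<tau>) * \<Delta> / (2 * \<sigma>)) * (1 - e))
      = ennreal (Phi (- sqrt (real \<tau>) * \<Delta> / (2 * \<sigma>))) * emeasure (PiM A (\<lambda>_. N)) X"
    using emeasure_PiM_draw_atLeast[OF \<sigma>, of "(Suc j, t)" A e] Phi_nonneg \<eta>
    unfolding X_def N_def by (simp add: A_def e_def ennreal_mult)
  also have "\<dots> \<le> emeasure (bandit_space K \<tau> \<sigma>) {\<omega>\<in>space (bandit_space K \<tau> \<sigma>). (restrict \<omega> A, restrict \<omega> B) \<in> G}"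
    unfolding bandit_space_def N_def[symmetric] using sec jK t
    by (intro emeasure_PiM_restrict_ge_sections[OF N _ _ _ _ _ G X]) (auto simp: A_def B_def)
  also have "{\<omega>\<in>space (bandit_space K \<tau> \<sigma>). (restrict \<omega> A, restrict \<omega> B) \<in> G}
      = {\<omega>\<in>space (bandit_space K \<tau> \<sigma>). e \<le> fst (\<omega> (Suc j, t)) \<and> delta_hat \<tau> \<Delta> \<omega> (policy upd \<tau> \<Delta> \<omega> j) j < 0}"
  proof -
    have "policy upd \<tau> \<Delta> (restrict \<omega> A) j = policy upd \<tau> \<Delta> \<omega> j"
      and "delta_hat \<tau> \<Delta> (restrict \<omega> B) p j = delta_hat \<tau> \<Delta> \<omega> p j" for \<omega> p
      by (auto intro!: policy_cong delta_hat_cong simp: A_def B_def)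
    moreover have "(restrict \<omega> A, restrict \<omega> B) \<in> space (PiM A (\<lambda>_. N) \<Otimes>\<^sub>M PiM B (\<lambda>_. N))"
      if "\<omega> \<in> space (bandit_space K \<tau> \<sigma>)" for \<omega>
      using that jK t by (auto simp: bandit_space_def N_def space_pair_measure space_PiM PiE_iff A_def B_def)
    ultimately show ?thesis
      unfolding G_def by (auto simp: A_def)
  qed
  finally show ?thesis unfolding e_def .
qed

lemma measure_bad_pull_ge:
  fixes \<sigma> \<Delta> \<eta> :: real and K \<tau> j t :: nat and upd :: "real \<Rightarrow> real \<Rightarrow> real"
  assumes \<sigma>: "\<sigma> > 0" and \<Delta>: "\<Delta> > 0" and \<eta>: "\<eta> > 0"
    and upd: "trpo_update \<eta> upd" and upd_meas: "case_prod upd \<in> borel_measurable borel"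
    and jK: "Suc j < K" and t: "t < \<tau>"
  shows "Phi (- sqrt (real \<tau>) * \<Delta> / (2 * \<sigma>)) * (1 - exp (- \<eta>)) \<le>
    measure (bandit_space K \<tau> \<sigma>)
      {\<omega>\<in>space (bandit_space K \<tau> \<sigma>). \<not> arm \<omega> (policy upd \<tau> \<Delta> \<omega> (Suc j)) (Suc j) t}"
proof -
  define P where "P = bandit_space K \<tau> \<sigma>"
  interpret P: prob_space P unfolding P_def using \<sigma> by (rule prob_space_bandit_space)
  have "\<not> arm \<omega> (policy upd \<tau> \<Delta> \<omega> (Suc j)) (Suc j) t"
    if "exp (- \<eta>) \<le> fst (\<omega> (Suc j, t))" and "delta_hat \<tau> \<Delta> \<omega> (policy upd \<tau> \<Delta> \<omega> j) j < 0" for \<omega>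
  proof -
    have "policy upd \<tau> \<Delta> \<omega> (Suc j) \<le> exp (- \<eta>)"
      using trpo_update_le_exp_neg[OF upd \<eta> _ _ that(2)] policy_in_open_unit_interval[OF upd, of \<tau> \<Delta> \<omega> j] by simp
    with that(1) show ?thesis by (simp add: arm_def)
  qed
  then have "emeasure P {\<omega>\<in>space P. exp (- \<eta>) \<le> fst (\<omega> (Suc j, t)) \<and> delta_hat \<tau> \<Delta> \<omega> (policy upd \<tau> \<Delta> \<omega> j) j < 0}
      \<le> emeasure P {\<omega>\<in>space P. \<not> arm \<omega> (policy upd \<tau> \<Delta> \<omega> (Suc j)) (Suc j) t}"
    unfolding P_def by (intro emeasure_mono[OF _ sets_bad_pull[OF upd_meas]]) auto
  with emeasure_gap_estimate_neg_and_draw_ge[OF \<sigma> \<Delta> \<eta> upd_meas jK t] show ?thesis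
    unfolding P_def[symmetric] P.emeasure_eq_measure
    using Phi_nonneg \<eta> by (simp add: ennreal_le_iff)
qed

lemma expected_bad_pulls_ge:
  fixes \<sigma> \<Delta> \<eta> :: real and K \<tau> :: nat and upd :: "real \<Rightarrow> real \<Rightarrow> real"
  assumes \<sigma>: "\<sigma> > 0" and \<Delta>: "\<Delta> > 0" and \<eta>: "\<eta> > 0"
    and upd: "trpo_update \<eta> upd" and upd_meas: "case_prod upd \<in> borel_measurable borel"
  shows "real (K - 1) * real \<tau> * (Phi (- sqrt (real \<tau>) * \<Delta> / (2 * \<sigma>)) * (1 - exp (- \<eta>)))
    \<le> (\<Sum>k<K. \<Sum>t<\<tau>. measure (bandit_space K \<tau> \<sigma>)
          {\<omega>\<in>space (bandit_space K \<tau> \<sigma>). \<not> arm \<omega> (policy upd \<tau> \<Delta> \<omega> k) k t})"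
    (is "_ * ?c \<le> (\<Sum>k<K. \<Sum>t<\<tau>. ?bad k t)")
proof -
  have "real (K - 1) * real \<tau> * ?c = (\<Sum>k\<in>{1..<K}. \<Sum>t<\<tau>. ?c)" by simp
  also have "\<dots> \<le> (\<Sum>k\<in>{1..<K}. \<Sum>t<\<tau>. ?bad k t)"
  proof (intro sum_mono)
    fix k t assume "k \<in> {1..<K}" "t \<in> {..<\<tau>}"
    then obtain j where "k = Suc j" "Suc j < K" "t < \<tau>" by (cases k) auto
    then show "?c \<le> ?bad k t"
      using measure_bad_pull_ge[OF \<sigma> \<Delta> \<eta> upd upd_meas] by simp
  qed
  also have "\<dots> \<le> (\<Sum>k<K. \<Sum>t<\<tau>. ?bad k t)"
    by (intro sum_mono2) (auto intro!: sum_nonneg)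
  finally show ?thesis .
qed

theorem lemma2:
  fixes \<Delta> \<sigma> \<eta> :: real and K \<tau> :: nat and upd :: "real \<Rightarrow> real \<Rightarrow> real"
  assumes "\<Delta> > 0" and "\<sigma> > 0" and "\<eta> > 0"
    and "trpo_update \<eta> upd"
    and "case_prod upd \<in> borel_measurable borel"
  shows "(\<integral>\<omega>. regret upd K \<tau> \<Delta> \<omega> \<partial>bandit_space K \<tau> \<sigma>)
           \<ge> \<Delta> / 2 * Phi (- sqrt (real \<tau>) * \<Delta> / (2 * \<sigma>)) * (1 - exp (- \<eta>))
             * (real K * real \<tau> - real \<tau>)"
proof -
  define c where "c = Phi (- sqrt (real \<tau>) * \<Delta> / (2 * \<sigma>)) * (1 - exp (- \<eta>))"
  have "0 \<le> c" using Phi_nonneg assms(3) by (simp add: c_def)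
  have "real K * real \<tau> - real \<tau> \<le> real (K - 1) * real \<tau>"
    by (cases K) (auto simp: algebra_simps)
  then have "\<Delta> / 2 * c * (real K * real \<tau> - real \<tau>) \<le> \<Delta> / 2 * c * (real (K - 1) * real \<tau>)"
    using \<open>0 \<le> c\<close> assms(1) by (intro mult_left_mono) simp_all
  also have "\<dots> \<le> \<Delta> * (real (K - 1) * real \<tau> * c)"
    using \<open>0 \<le> c\<close> assms(1) mult_nonneg_nonneg[of \<Delta> "real (K - 1) * real \<tau> * c"] by simp
  also have "\<dots> \<le> (\<integral>\<omega>. regret upd K \<tau> \<Delta> \<omega> \<partial>bandit_space K \<tau> \<sigma>)"
    unfolding integral_regret_eq_bad_pulls[OF assms(2,5)] c_def
    using mult_left_mono[OF expected_bad_pulls_ge[OF assms(2,1,3-5)]] assms(1) by simp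
  finally show ?thesis
    unfolding c_def by (simp add: mult.assoc)
qed

end
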